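(* Let $S$ be a finite set of points in the plane and let $\mathcal D$ be a set of $k$ pairwise non-opposite directions such that $S$ is in $\mathcal D$-general position. If $T$ is a $\mathcal D$-monotone geometric spanning tree of $S$, then $T$ has at most $2k$ leaves.
   Context: A direction is a unit vector in $\mathbb{R}^2$; two directions $d,d'$ are opposite if $d'=-d$. A finite point set $S$ is in $d$-general position if no two points of $S$ lie on a common line orthogonal to $d$; $S$ is in $\mathcal D$-general position if it is in $d$-general position for every $d\in\mathcal D$. A geometric path $\langle p_1,\dots,p_r\rangle$ is $d$-monotone if its vertex set is in $d$-general position and $\langle p_1,d\rangle,\dots,\langle p_r,d\rangle$ is strictly increasing or strictly decreasing. A geometric spanning tree of $S$ is a tree with vertex set $S$ whose edges are straight segments; it is $\mathcal D$-monotone if for every pair of vertices $u,v$ there is $d\in\mathcal D$ such that the path of $T$ from $u$ to $v$ is $d$-monotone. *)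

theory Defs
  imports "HOL-Analysis.Analysis"
begin

type_synonym point = "real^2"

definition direction :: "point \<Rightarrow> bool" where
  "direction d \<longleftrightarrow> norm d = 1"

definition opposite :: "point \<Rightarrow> point \<Rightarrow> bool" where
  "opposite d d' \<longleftrightarrow> d' = - d"

text \<open>No two (distinct) points of S lie on a common line orthogonal to d.\<close>
definition d_general_position :: "point \<Rightarrow> point set \<Rightarrow> bool" where
  "d_general_position d S \<longleftrightarrow>
     (\<forall>p\<in>S. \<forall>q\<in>S. p \<noteq> q \<longrightarrow> inner p d \<noteq> inner q d)"

definition D_general_position :: "point set \<Rightarrow> point set \<Rightarrow> bool" where
  "D_general_position D S \<longleftrightarrow> (\<forall>d\<in>D. d_general_position d S)"

definition d_monotone :: "point \<Rightarrow> point list \<Rightarrow> bool" where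
  "d_monotone d ps \<longleftrightarrow> d_general_position d (set ps) \<and>
     (sorted_wrt (<) (map (\<lambda>p. inner p d) ps) \<or> sorted_wrt (>) (map (\<lambda>p. inner p d) ps))"

text \<open>Graphs on a vertex set V with edge set E (edges are 2-element subsets of V,
  drawn as straight segments).\<close>
definition graph :: "point set \<Rightarrow> point set set \<Rightarrow> bool" where
  "graph V E \<longleftrightarrow> finite V \<and> (\<forall>e\<in>E. e \<subseteq> V \<and> card e = 2)"

definition is_path :: "point set \<Rightarrow> point set set \<Rightarrow> point list \<Rightarrow> bool" where
  "is_path V E ps \<longleftrightarrow> ps \<noteq> [] \<and> distinct ps \<and> set ps \<subseteq> V \<and>
     (\<forall>i. Suc i < length ps \<longrightarrow> {ps ! i, ps ! Suc i} \<in> E)"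

definition connected_graph :: "point set \<Rightarrow> point set set \<Rightarrow> bool" where
  "connected_graph V E \<longleftrightarrow> V \<noteq> {} \<and>
     (\<forall>u\<in>V. \<forall>v\<in>V. \<exists>ps. is_path V E ps \<and> hd ps = u \<and> last ps = v)"

definition acyclic_graph :: "point set \<Rightarrow> point set set \<Rightarrow> bool" where
  "acyclic_graph V E \<longleftrightarrow>
     \<not> (\<exists>ps. is_path V E ps \<and> length ps \<ge> 3 \<and> {last ps, hd ps} \<in> E)"

definition spanning_tree :: "point set \<Rightarrow> point set set \<Rightarrow> bool" where
  "spanning_tree S E \<longleftrightarrow> graph S E \<and> connected_graph S E \<and> acyclic_graph S E"

text \<open>In a tree the path between u and v is unique, so "the path of T from u to v"
  is any path from u to v.\<close>
definition D_monotone_tree :: "point set \<Rightarrow> point set \<Rightarrow> point set set \<Rightarrow> bool" where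
  "D_monotone_tree D S E \<longleftrightarrow> spanning_tree S E \<and>
     (\<forall>u\<in>S. \<forall>v\<in>S. \<exists>d\<in>D. \<exists>ps. is_path S E ps \<and> hd ps = u \<and> last ps = v \<and> d_monotone d ps)"

definition degree :: "point set set \<Rightarrow> point \<Rightarrow> nat" where
  "degree E v = card {e\<in>E. v \<in> e}"

definition leaves :: "point set \<Rightarrow> point set set \<Rightarrow> point set" where
  "leaves S E = {v\<in>S. degree E v = 1}"

end

theory Submission imports Defs begin

text \<open>Send every leaf u to the set of directions d \<in> D with \<langle>w - u, d\<rangle> > 0, where w is the
  unique neighbour of u. If u \<noteq> v are leaves and the path from u to v is d-monotone,
  its first and last steps point the same way along d, so the edges leaving u and v do
  not; hence the map is injective. Its values are sign patterns of vectors orthogonal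
  to no direction of D, i.e. open sectors cut out by the k lines through the origin
  orthogonal to D, and k lines through the origin leave at most 2k such sectors.\<close>

definition sign_pattern :: "point set \<Rightarrow> point \<Rightarrow> point set" where
  "sign_pattern D w = {e\<in>D. 0 < inner w e}"

definition sign_patterns :: "point set \<Rightarrow> point set set" where
  "sign_patterns D = {sign_pattern D w | w. \<forall>e\<in>D. inner w e \<noteq> 0}"

definition perp :: "point \<Rightarrow> point" where
  "perp d = (\<chi> i. if i = 1 then - (d$2) else d$1)"

lemma orthogonal_imp_multiple_perp:
  fixes d z :: point
  assumes "d \<noteq> 0" "inner z d = 0"
  obtains t where "z = t *\<^sub>R perp d"
proof -
  have ip: "z$1 * d$1 + z$2 * d$2 = 0" using assms(2) by (simp add: inner_vec_def sum_2)
  have nz: "d$1 \<noteq> 0 \<or> d$2 \<noteq> 0" using assms(1) by (metis exhaust_2 vec_eq_iff zero_index)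
  show ?thesis
  proof (cases "d$1 = 0")
    case True
    with nz ip have "d$2 \<noteq> 0" "z$2 = 0" by auto
    with True have "z = (- z$1 / d$2) *\<^sub>R perp d" by (simp add: perp_def vec_eq_iff forall_2)
    then show ?thesis by (rule that)
  next
    case False
    with ip have "z = (z$2 / d$1) *\<^sub>R perp d" by (simp add: perp_def vec_eq_iff forall_2 field_simps)
    then show ?thesis by (rule that)
  qed
qed

lemma finite_sign_patterns: "finite D \<Longrightarrow> finite (sign_patterns D)"
  by (rule finite_subset[of _ "Pow D"]) (auto simp: sign_patterns_def sign_pattern_def)

lemma sign_pattern_scaleR_pos: "0 < t \<Longrightarrow> sign_pattern D (t *\<^sub>R w) = sign_pattern D w"
  by (auto simp: sign_pattern_def zero_less_mult_iff)

lemma sign_pattern_positive_combination: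
  assumes "0 < a" "0 < b" "\<forall>e\<in>D. inner w e \<noteq> 0" "\<forall>e\<in>D. inner w' e \<noteq> 0"
    and "sign_pattern D w = sign_pattern D w'"
  shows "sign_pattern D (a *\<^sub>R w + b *\<^sub>R w') = sign_pattern D w"
    and "\<forall>e\<in>D. inner (a *\<^sub>R w + b *\<^sub>R w') e \<noteq> 0"
proof -
  have same_sign: "0 < inner w e \<longleftrightarrow> 0 < inner w' e" if "e \<in> D" for e
    using assms(5) that by (auto simp: sign_pattern_def set_eq_iff)
  have "0 < inner (a *\<^sub>R w + b *\<^sub>R w') e \<longleftrightarrow> 0 < inner w e"
    and "inner (a *\<^sub>R w + b *\<^sub>R w') e \<noteq> 0" if e: "e \<in> D" for e
  proof -
    have "inner w e \<noteq> 0" "inner w' e \<noteq> 0" using assms(3,4) e by auto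
    with same_sign[OF e] have "(0 < inner w e \<and> 0 < inner w' e) \<or> (inner w e < 0 \<and> inner w' e < 0)"
      by linarith
    with assms(1,2) have "(0 < a * inner w e + b * inner w' e \<and> 0 < inner w e) \<or>
        (a * inner w e + b * inner w' e < 0 \<and> inner w e < 0)"
      by (smt (verit) mult_pos_pos mult_pos_neg)
    then show "0 < inner (a *\<^sub>R w + b *\<^sub>R w') e \<longleftrightarrow> 0 < inner w e"
      and "inner (a *\<^sub>R w + b *\<^sub>R w') e \<noteq> 0"
      by (auto simp: inner_add_left)
  qed
  then show "sign_pattern D (a *\<^sub>R w + b *\<^sub>R w') = sign_pattern D w"
    and "\<forall>e\<in>D. inner (a *\<^sub>R w + b *\<^sub>R w') e \<noteq> 0"
    by (auto simp: sign_pattern_def)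
qed

text \<open>A pattern of D realised on both sides of the line orthogonal to d is also realised
  on that line, which meets only the two sectors containing \<open>\<pm>perp d\<close>.\<close>
lemma sign_pattern_on_both_sides:
  assumes "d \<noteq> 0" "D \<noteq> {}"
    and "\<forall>e\<in>D. inner w e \<noteq> 0" "\<forall>e\<in>D. inner w' e \<noteq> 0"
    and "inner w d < 0" "0 < inner w' d"
    and "sign_pattern D w = sign_pattern D w'"
  shows "sign_pattern D w \<in> {sign_pattern D (perp d), sign_pattern D (- perp d)}"
proof -
  define z where "z = inner w' d *\<^sub>R w + (- inner w d) *\<^sub>R w'"
  have z_pattern: "sign_pattern D z = sign_pattern D w" and z_generic: "\<forall>e\<in>D. inner z e \<noteq> 0"
    unfolding z_def using assms(5) by (intro sign_pattern_positive_combination assms(3,4,6,7); simp)+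
  have "inner z d = 0" unfolding z_def by (simp add: inner_diff_left mult.commute)
  then obtain t where t: "z = t *\<^sub>R perp d" using assms(1) orthogonal_imp_multiple_perp by blast
  obtain e where "e \<in> D" using assms(2) by blast
  with z_generic t have "t \<noteq> 0" by auto
  then consider "0 < t" | "0 < - t" by linarith
  then show ?thesis
  proof cases
    case 1
    then show ?thesis using z_pattern t sign_pattern_scaleR_pos by simp
  next
    case 2
    have "z = (- t) *\<^sub>R (- perp d)" using t by simp
    then have "sign_pattern D z = sign_pattern D (- perp d)" using sign_pattern_scaleR_pos[OF 2] by metis
    then show ?thesis using z_pattern by simp
  qed
qed

text \<open>Split the patterns of \<open>insert d D\<close> by whether they contain d. Deleting d maps each
  class injectively into the patterns of D, and the two images overlap only on patterns
  realised on both sides of the line orthogonal to d.\<close>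
lemma card_sign_patterns_insert:
  assumes "finite D" "D \<noteq> {}" "d \<notin> D" "d \<noteq> 0"
  shows "card (sign_patterns (insert d D)) \<le> card (sign_patterns D) + 2"
proof -
  let ?P = "sign_patterns (insert d D)"
  define Neg where "Neg = {\<sigma>\<in>?P. d \<notin> \<sigma>}"
  define Pos where "Pos = {\<sigma>\<in>?P. d \<in> \<sigma>}"
  define Pos_D where "Pos_D = (\<lambda>\<sigma>. \<sigma> - {d}) ` Pos"
  have restrict: "\<exists>w. (\<forall>e\<in>insert d D. inner w e \<noteq> 0) \<and> \<sigma> = sign_pattern (insert d D) w \<and>
      \<sigma> - {d} = sign_pattern D w" if "\<sigma> \<in> ?P" for \<sigma>
    using that assms(3) by (auto simp: sign_patterns_def sign_pattern_def)
  have Neg_sub: "Neg \<subseteq> sign_patterns D" and Pos_sub: "Pos_D \<subseteq> sign_patterns D"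
    using restrict unfolding Neg_def Pos_D_def Pos_def sign_patterns_def by fastforce+
  have "Neg \<inter> Pos_D \<subseteq> {sign_pattern D (perp d), sign_pattern D (- perp d)}"
  proof
    fix \<tau> assume "\<tau> \<in> Neg \<inter> Pos_D"
    then obtain \<sigma>' where "\<tau> \<in> ?P" "d \<notin> \<tau>" "\<sigma>' \<in> ?P" "d \<in> \<sigma>'" "\<tau> = \<sigma>' - {d}"
      unfolding Neg_def Pos_D_def Pos_def by blast
    moreover have "d \<in> sign_pattern (insert d D) w \<longleftrightarrow> 0 < inner w d" for w
      by (simp add: sign_pattern_def)
    ultimately obtain w w' where
      "\<forall>e\<in>insert d D. inner w e \<noteq> 0" "\<not> 0 < inner w d" "\<tau> = sign_pattern D w" and
      "\<forall>e\<in>insert d D. inner w' e \<noteq> 0" "0 < inner w' d" "\<tau> = sign_pattern D w'"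
      using restrict by (metis Diff_empty Diff_insert0)
    then show "\<tau> \<in> {sign_pattern D (perp d), sign_pattern D (- perp d)}"
      using sign_pattern_on_both_sides[OF assms(4,2), of w w'] by force
  qed
  then have "card (Neg \<inter> Pos_D) \<le> card {sign_pattern D (perp d), sign_pattern D (- perp d)}"
    by (intro card_mono) auto
  also have "\<dots> \<le> 2" by (simp add: card_insert_if)
  finally have card_Int: "card (Neg \<inter> Pos_D) \<le> 2" .
  have "card ?P = card Neg + card Pos"
  proof -
    have "?P = Neg \<union> Pos" "Neg \<inter> Pos = {}" by (auto simp: Neg_def Pos_def)
    then show ?thesis
      using finite_sign_patterns[of "insert d D"] assms(1) by (metis card_Un_disjoint finite_Un finite_insert)
  qed
  also have "card Pos = card Pos_D"
    unfolding Pos_D_def Pos_def by (rule card_image[symmetric]) (auto simp: inj_on_def)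
  also have "card Neg + \<dots> = card (Neg \<union> Pos_D) + card (Neg \<inter> Pos_D)"
    using Neg_sub Pos_sub finite_sign_patterns[OF assms(1)] by (metis card_Un_Int finite_subset)
  also have "\<dots> \<le> card (sign_patterns D) + 2"
    using Neg_sub Pos_sub finite_sign_patterns[OF assms(1)] card_Int
    by (metis add_mono card_mono le_sup_iff)
  finally show ?thesis .
qed

lemma card_sign_patterns_le:
  assumes "finite D" "D \<noteq> {}" "0 \<notin> D"
  shows "card (sign_patterns D) \<le> 2 * card D"
  using assms
proof (induction D rule: finite_ne_induct)
  case (singleton d)
  have "card (sign_patterns {d}) \<le> card (Pow {d})"
    by (rule card_mono) (auto simp: sign_patterns_def sign_pattern_def)
  then show ?case by (simp add: card_Pow)
next
  case (insert d D)
  then show ?case using card_sign_patterns_insert[of D d] by simp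
qed

text \<open>Only meaningful at a leaf; elsewhere \<open>THE\<close> yields an unspecified point.\<close>
definition neighbour :: "point set set \<Rightarrow> point \<Rightarrow> point" where
  "neighbour E u = (THE x. {u, x} \<in> E)"

lemma leaf_has_unique_neighbour:
  assumes "graph S E" "u \<in> leaves S E"
  shows "\<exists>!x. {u, x} \<in> E"
proof -
  have "card {e\<in>E. u \<in> e} = 1" using assms(2) by (simp add: leaves_def degree_def)
  then obtain e0 where e0: "{e\<in>E. u \<in> e} = {e0}" by (auto simp: card_1_singleton_iff)
  then have "e0 \<in> E" "card e0 = 2" "u \<in> e0" using assms(1) by (auto simp: graph_def)
  moreover obtain a b where "e0 = {a, b}" "a \<noteq> b" using \<open>card e0 = 2\<close> by (auto simp: card_2_iff)
  ultimately obtain x where x: "e0 = {u, x}" "x \<noteq> u" by (metis insert_commute insertE singletonD)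
  show ?thesis
  proof
    show "{u, x} \<in> E" using x \<open>e0 \<in> E\<close> by simp
    fix y assume "{u, y} \<in> E"
    then have "{u, y} \<in> {e\<in>E. u \<in> e}" by simp
    then have "{u, y} = {u, x}" using e0 x by simp
    then show "y = x" by (metis doubleton_eq_iff)
  qed
qed

lemma neighbour_of_leaf:
  assumes "graph S E" "u \<in> leaves S E"
  shows "{u, neighbour E u} \<in> E" and "{u, y} \<in> E \<Longrightarrow> y = neighbour E u"
    and "neighbour E u \<in> S" and "neighbour E u \<noteq> u"
proof -
  show edge: "{u, neighbour E u} \<in> E"
    unfolding neighbour_def by (rule theI') (rule leaf_has_unique_neighbour[OF assms])
  show "{u, y} \<in> E \<Longrightarrow> y = neighbour E u"
    using edge leaf_has_unique_neighbour[OF assms] by blast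
  from edge assms(1) show "neighbour E u \<in> S" "neighbour E u \<noteq> u"
    by (auto simp: graph_def)
qed

lemma is_path_rev:
  assumes "is_path V E ps"
  shows "is_path V E (rev ps)"
proof -
  have "{rev ps ! i, rev ps ! Suc i} \<in> E" if "Suc i < length ps" for i
  proof -
    have "{ps ! (length ps - Suc (Suc i)), ps ! Suc (length ps - Suc (Suc i))} \<in> E"
      using assms that by (simp add: is_path_def)
    moreover have "Suc (length ps - Suc (Suc i)) = length ps - Suc i" using that by simp
    ultimately show ?thesis using that by (simp add: rev_nth insert_commute)
  qed
  then show ?thesis using assms by (simp add: is_path_def)
qed

lemma path_from_leaf_second_vertex:
  assumes "graph S E" "u \<in> leaves S E" "is_path S E ps" "hd ps = u" "2 \<le> length ps"
  shows "ps ! 1 = neighbour E u"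
proof -
  have "{ps ! 0, ps ! 1} \<in> E" using assms(3,5) by (simp add: is_path_def)
  moreover have "ps ! 0 = u" using assms(4,5) hd_conv_nth[of ps] by fastforce
  ultimately show ?thesis using neighbour_of_leaf(2)[OF assms(1,2)] by simp
qed

lemma path_to_leaf_penultimate_vertex:
  assumes "graph S E" "v \<in> leaves S E" "is_path S E ps" "last ps = v" "2 \<le> length ps"
  shows "ps ! (length ps - 2) = neighbour E v"
proof -
  have "rev ps ! 1 = neighbour E v"
    using assms by (intro path_from_leaf_second_vertex[OF assms(1,2) is_path_rev]) (auto simp: hd_rev)
  then show ?thesis using assms(5) by (simp add: rev_nth numeral_2_eq_2)
qed

lemma d_monotone_first_last_step:
  assumes "d_monotone d ps" "2 \<le> length ps"
  shows "(0 < inner (ps ! 1 - hd ps) d \<and> inner (ps ! (length ps - 2) - last ps) d < 0) \<or>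
    (inner (ps ! 1 - hd ps) d < 0 \<and> 0 < inner (ps ! (length ps - 2) - last ps) d)"
proof -
  let ?n = "length ps" and ?h = "\<lambda>i. inner (ps ! i) d"
  have "hd ps = ps ! 0" "last ps = ps ! (?n - 1)"
    using assms(2) hd_conv_nth[of ps] last_conv_nth[of ps] by fastforce+
  moreover have "(?h 0 < ?h 1 \<and> ?h (?n - 2) < ?h (?n - 1)) \<or> (?h 1 < ?h 0 \<and> ?h (?n - 1) < ?h (?n - 2))"
  proof -
    have "0 < (1::nat)" "1 < ?n" "?n - 2 < ?n - 1" "?n - 1 < ?n" using assms(2) by auto
    moreover have "(\<forall>i j. i < j \<longrightarrow> j < ?n \<longrightarrow> ?h i < ?h j) \<or> (\<forall>i j. i < j \<longrightarrow> j < ?n \<longrightarrow> ?h j < ?h i)"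
      using assms(1) unfolding d_monotone_def sorted_wrt_iff_nth_less by auto
    ultimately show ?thesis by blast
  qed
  ultimately show ?thesis unfolding inner_diff_left by (simp only:) linarith
qed

lemma leaf_edge_sign_pattern_mem:
  assumes "graph S E" "D_general_position D S" "u \<in> leaves S E"
  shows "sign_pattern D (neighbour E u - u) \<in> sign_patterns D"
proof -
  have "u \<in> S" using assms(3) by (simp add: leaves_def)
  then have "inner (neighbour E u - u) e \<noteq> 0" if "e \<in> D" for e
    using assms(2) that neighbour_of_leaf(3,4)[OF assms(1,3)]
    by (auto simp: D_general_position_def d_general_position_def inner_diff_left)
  then show ?thesis by (auto simp: sign_patterns_def)
qed

lemma inj_on_leaf_edge_sign_pattern:
  assumes "D_monotone_tree D S E"
  shows "inj_on (\<lambda>u. sign_pattern D (neighbour E u - u)) (leaves S E)"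
proof (rule inj_onI, rule ccontr)
  fix u v assume u: "u \<in> leaves S E" and v: "v \<in> leaves S E" and "u \<noteq> v"
    and same: "sign_pattern D (neighbour E u - u) = sign_pattern D (neighbour E v - v)"
  have graph: "graph S E" using assms by (simp add: D_monotone_tree_def spanning_tree_def)
  obtain d ps where "d \<in> D" and path: "is_path S E ps" "hd ps = u" "last ps = v" and "d_monotone d ps"
  proof -
    have "u \<in> S" "v \<in> S" using u v by (simp_all add: leaves_def)
    then show ?thesis using assms that unfolding D_monotone_tree_def by blast
  qed
  have "2 \<le> length ps"
    using path \<open>u \<noteq> v\<close> by (cases ps) (auto simp: is_path_def Suc_le_eq split: if_splits)
  have "(0 < inner (neighbour E u - u) d \<and> inner (neighbour E v - v) d < 0) \<or>
      (inner (neighbour E u - u) d < 0 \<and> 0 < inner (neighbour E v - v) d)"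
    using d_monotone_first_last_step[OF \<open>d_monotone d ps\<close> \<open>2 \<le> length ps\<close>] path
      path_from_leaf_second_vertex[OF graph u path(1,2) \<open>2 \<le> length ps\<close>]
      path_to_leaf_penultimate_vertex[OF graph v path(1,3) \<open>2 \<le> length ps\<close>]
    by simp
  moreover have "0 < inner (neighbour E u - u) d \<longleftrightarrow> 0 < inner (neighbour E v - v) d"
    using same[unfolded sign_pattern_def set_eq_iff, rule_format, of d] \<open>d \<in> D\<close> by simp
  ultimately show False by linarith
qed

theorem lemma7:
  fixes S :: "(real^2) set" and D :: "(real^2) set" and E :: "(real^2) set set" and k :: nat
  assumes "finite S"
    and "finite D" and "card D = k"
    and "\<forall>d\<in>D. direction d"
    and "\<forall>d\<in>D. \<forall>d'\<in>D. \<not> opposite d d'"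
    and "D_general_position D S"
    and "D_monotone_tree D S E"
  shows "card (leaves S E) \<le> 2 * k"
proof (cases "D = {}")
  case True
  then have "S = {}" using assms(7) by (auto simp: D_monotone_tree_def)
  then show ?thesis by (simp add: leaves_def)
next
  case False
  let ?f = "\<lambda>u. sign_pattern D (neighbour E u - u)"
  have graph: "graph S E" using assms(7) by (simp add: D_monotone_tree_def spanning_tree_def)
  have "0 \<notin> D" using assms(4) by (auto simp: direction_def)
  have "card (leaves S E) = card (?f ` leaves S E)"
    using inj_on_leaf_edge_sign_pattern[OF assms(7)] by (simp add: card_image)
  also have "\<dots> \<le> card (sign_patterns D)"
    using leaf_edge_sign_pattern_mem[OF graph assms(6)] finite_sign_patterns[OF assms(2)]
    by (intro card_mono) auto
  also have "\<dots> \<le> 2 * card D" using card_sign_patterns_le[OF assms(2) False \<open>0 \<notin> D\<close>] .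
  finally show ?thesis using assms(3) by simp
qed

end
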